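(* Let $N=\{1,\dots,n\}$, $n\ge2$, be a parallel-link network with unit demand and affine latencies $\ell_i(x_i)=a_ix_i+b_i$, $a_i>0$, $b_i\ge0$, with $x_i(0)>0$ for all $i\in N$. For $c\in\mathbb{R}_+$ let $t(c)$ be the unique element of $\mathcal{T}(c)$, $x(c)=x(t(c))$, and $A(c)=\{i\in N: t_i(c)=c\}$. Then there exist an integer $1\le j\le n$, numbers $c_1>c_2>\dots>c_j>0$, and sets $\emptyset=A_0\subsetneq A_1\subsetneq\dots\subsetneq A_j=N$ such that, with $c_0=\infty$: $A(c)=A_k$ for all $c\in(c_{k+1},c_k]\cap\mathbb{R}_+$, $k=0,\dots,j-1$, and $A(c)=N$ for all $c\in[0,c_j]$. Moreover, on each of the intervals $[c_1,\infty)$, $[c_{k+1},c_k]$ ($k=1,\dots,j-1$) and $[0,c_j]$, the map $c\mapsto x(c)$ is affine and $c\mapsto C(x(c))$ is a polynomial of degree at most $2$ in $c$; on $[c_1,\infty)$ and on $[0,c_j]$ the flow $x(c)$ is constant (on $[0,c_j]$ it equals $x(0)$). In particular $\min_{c\in\mathbb{R}_+}C(x(c))$ is attained.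
   Context: Parallel links $N$, one unit of flow; flows $x\in\mathbb{R}^N_+$ with $\sum_ix_i=1$; total latency cost $C(x)=\sum_{i\in N}\ell_i(x_i)x_i$. For tolls $t\in\mathbb{R}^N_+$, $x(t)$ is the unique Wardrop equilibrium for $t$ (for all $i,j$ with $x_i>0$: $\ell_i(x_i)+t_i\le\ell_j(x_j)+t_j$); $x(0)$ is the untolled one. Profit $\Pi_i(t)=t_ix_i(t)$. $\mathcal{T}(c)$: toll vectors $t$ with $0\le t_i\le c$ for all $i$ such that for every $i$ and $t'_i\in[0,c]$, $\Pi_i(t_i,t_{-i})\ge\Pi_i(t'_i,t_{-i})$ (flow recomputed). Under the hypotheses, $\mathcal{T}(c)$ is a singleton for every $c\in\mathbb{R}_+$. *)

theory Defs
  imports Complex_Main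
begin

text \<open>Parallel-link network with links 0..n-1 (paper: 1..n), affine latencies
  l_i(x) = a_i x + b_i. Flows and tolls are functions nat => real; components
  with index >= n are required to be 0 so that the equilibrium objects are
  unique as functions.\<close>

definition latency :: "(nat \<Rightarrow> real) \<Rightarrow> (nat \<Rightarrow> real) \<Rightarrow> nat \<Rightarrow> real \<Rightarrow> real" where
  "latency a b i y = a i * y + b i"

definition feasible_flow :: "nat \<Rightarrow> (nat \<Rightarrow> real) \<Rightarrow> bool" where
  "feasible_flow n x \<longleftrightarrow> (\<forall>i<n. 0 \<le> x i) \<and> (\<forall>i\<ge>n. x i = 0) \<and> (\<Sum>i<n. x i) = 1"

definition wardrop :: "nat \<Rightarrow> (nat \<Rightarrow> real) \<Rightarrow> (nat \<Rightarrow> real) \<Rightarrow> (nat \<Rightarrow> real) \<Rightarrow> (nat \<Rightarrow> real) \<Rightarrow> bool" where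
  "wardrop n a b t x \<longleftrightarrow> feasible_flow n x \<and>
     (\<forall>i<n. \<forall>j<n. 0 < x i \<longrightarrow> latency a b i (x i) + t i \<le> latency a b j (x j) + t j)"

definition eq_flow :: "nat \<Rightarrow> (nat \<Rightarrow> real) \<Rightarrow> (nat \<Rightarrow> real) \<Rightarrow> (nat \<Rightarrow> real) \<Rightarrow> (nat \<Rightarrow> real)" where
  "eq_flow n a b t = (THE x. wardrop n a b t x)"

definition profit :: "nat \<Rightarrow> (nat \<Rightarrow> real) \<Rightarrow> (nat \<Rightarrow> real) \<Rightarrow> (nat \<Rightarrow> real) \<Rightarrow> nat \<Rightarrow> real" where
  "profit n a b t i = t i * eq_flow n a b t i"

definition total_cost :: "nat \<Rightarrow> (nat \<Rightarrow> real) \<Rightarrow> (nat \<Rightarrow> real) \<Rightarrow> (nat \<Rightarrow> real) \<Rightarrow> real" where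
  "total_cost n a b x = (\<Sum>i<n. latency a b i (x i) * x i)"

definition toll_eq :: "nat \<Rightarrow> (nat \<Rightarrow> real) \<Rightarrow> (nat \<Rightarrow> real) \<Rightarrow> real \<Rightarrow> (nat \<Rightarrow> real) \<Rightarrow> bool" where
  "toll_eq n a b c t \<longleftrightarrow> (\<forall>i<n. 0 \<le> t i \<and> t i \<le> c) \<and> (\<forall>i\<ge>n. t i = 0) \<and>
     (\<forall>i<n. \<forall>t'. 0 \<le> t' \<and> t' \<le> c \<longrightarrow> profit n a b (t(i := t')) i \<le> profit n a b t i)"

definition toll_of_cap :: "nat \<Rightarrow> (nat \<Rightarrow> real) \<Rightarrow> (nat \<Rightarrow> real) \<Rightarrow> real \<Rightarrow> (nat \<Rightarrow> real)" where
  "toll_of_cap n a b c = (THE t. toll_eq n a b c t)"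

definition flow_of_cap :: "nat \<Rightarrow> (nat \<Rightarrow> real) \<Rightarrow> (nat \<Rightarrow> real) \<Rightarrow> real \<Rightarrow> (nat \<Rightarrow> real)" where
  "flow_of_cap n a b c = eq_flow n a b (toll_of_cap n a b c)"

definition capped_set :: "nat \<Rightarrow> (nat \<Rightarrow> real) \<Rightarrow> (nat \<Rightarrow> real) \<Rightarrow> real \<Rightarrow> nat set" where
  "capped_set n a b c = {i. i < n \<and> toll_of_cap n a b c i = c}"

end

(*
  For a cap c the tolls t(c) are given explicitly. With S = (\<Sum>i. 1 / a i) and markup
  m i = 2 - 1 / (a i * S), link i charges min c ((\<lambda> - b i) / m i), where the common cost level
  \<lambda> = \<lambda>(c) is determined by the unit demand. This vector is a mutual best response: a deviation
  of link i by d moves the level by d / (a i * S), so link i faces a concave quadratic profit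
  maximised at the clipped toll. By uniqueness of T(c) it is t(c).

  \<lambda> is nondecreasing and 1-Lipschitz in c, so (\<lambda>(c) - b i) / m i - c is strictly decreasing and
  link i is at the cap exactly for c up to a threshold. The breakpoints c_1 > ... > c_j are the
  distinct thresholds. Between two of them the capped set is fixed, the level is affine in c by the
  demand constraint, so the flows are affine and the cost quadratic. Above c_1 no link and below
  c_j every link is capped; then c only shifts the level and the flows do not move. The cost is
  continuous and constant beyond c_1, so its minimum is attained on [0, c_1].
*)

theory Submission
  imports Defs "HOL-Analysis.Lipschitz"
begin

lemma strictly_decreasing_sign:
  fixes g :: "real \<Rightarrow> real"
  assumes dec: "\<And>x y. x \<in> S \<Longrightarrow> y \<in> S \<Longrightarrow> x < y \<Longrightarrow> g y < g x"
    and "z \<in> S" "g z = 0" "x \<in> S"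
  shows "0 \<le> g x \<longleftrightarrow> x \<le> z" and "g x \<le> 0 \<longleftrightarrow> z \<le> x"
proof -
  have "x < z \<Longrightarrow> 0 < g x" "z < x \<Longrightarrow> g x < 0" using assms by force+
  then show "0 \<le> g x \<longleftrightarrow> x \<le> z" "g x \<le> 0 \<longleftrightarrow> z \<le> x"
    using \<open>g z = 0\<close> by (cases x z rule: linorder_cases; auto)+
qed

lemma continuous_constant_beyond_attains_min:
  fixes g :: "real \<Rightarrow> real"
  assumes cont: "continuous_on {0..d} g" and "0 \<le> d" and const: "\<And>c. d \<le> c \<Longrightarrow> g c = g d"
  shows "\<exists>c\<ge>0. \<forall>c'\<ge>0. g c \<le> g c'"
proof -
  obtain c where c: "c \<in> {0..d}" "\<And>c'. c' \<in> {0..d} \<Longrightarrow> g c \<le> g c'"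
    using continuous_attains_inf[OF compact_Icc _ cont] \<open>0 \<le> d\<close> by auto
  have "g c \<le> g c'" if "0 \<le> c'" for c'
    using c(2)[of c'] c(2)[of d] const[of c'] \<open>0 \<le> d\<close> that by (cases "c' \<le> d") auto
  with c show ?thesis by auto
qed

lemma decreasing_enumeration:
  fixes Z :: "real set"
  assumes "finite Z"
  obtains cs where "\<And>k l. 1 \<le> k \<Longrightarrow> k < l \<Longrightarrow> l \<le> card Z \<Longrightarrow> cs l < cs k"
    and "cs ` {1..card Z} = Z"
proof -
  define L where "L = sorted_list_of_set Z"
  have len: "length L = card Z" and set: "set L = Z" and sorted: "sorted_wrt (<) L"
    using assms unfolding L_def by (simp_all add: strict_sorted_list_of_set)
  show ?thesis
  proof (rule that[of "\<lambda>k. L ! (card Z - k)"])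
    fix k l :: nat assume "1 \<le> k" "k < l" "l \<le> card Z"
    then show "L ! (card Z - l) < L ! (card Z - k)"
      using sorted len by (intro sorted_wrt_nth_less[where P = "(<)"]) auto
  next
    show "(\<lambda>k. L ! (card Z - k)) ` {1..card Z} = Z"
    proof (intro equalityI subsetI)
      fix z assume "z \<in> (\<lambda>k. L ! (card Z - k)) ` {1..card Z}"
      then obtain k where k: "k \<in> {1..card Z}" "z = L ! (card Z - k)" by blast
      then have "card Z - k < length L" using len by auto
      then show "z \<in> Z" using k set nth_mem by blast
    next
      fix z assume "z \<in> Z"
      then obtain p where "p < length L" "L ! p = z" using set by (metis in_set_conv_nth)
      then show "z \<in> (\<lambda>k. L ! (card Z - k)) ` {1..card Z}"
        using len by (intro image_eqI[of _ _ "card Z - p"]) auto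
    qed
  qed
qed

lemma strictly_decreasing_values_between:
  fixes cs :: "nat \<Rightarrow> real"
  assumes dec: "\<And>k l. 1 \<le> k \<Longrightarrow> k < l \<Longrightarrow> l \<le> j \<Longrightarrow> cs l < cs k" and z: "z \<in> cs ` {1..j}"
  shows "cs j \<le> z \<and> z \<le> cs 1" and "1 \<le> k \<Longrightarrow> k < j \<Longrightarrow> z \<le> cs (k + 1) \<or> cs k \<le> z"
proof -
  have le: "cs l \<le> cs k" if "1 \<le> k" "k \<le> l" "l \<le> j" for k l
    using dec[of k l] that by (cases "k = l") auto
  obtain l where l: "l \<in> {1..j}" "z = cs l" using z by blast
  show "cs j \<le> z \<and> z \<le> cs 1" using l le by auto
  show "z \<le> cs (k + 1) \<or> cs k \<le> z" if "1 \<le> k" "k < j"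
    using l le[of "k + 1" l] le[of l k] that by (cases "l \<le> k") auto
qed

text \<open>In the proof, cs lists the distinct values of f in decreasing order and
  As k = {i \<in> D. cs k \<le> f i} for k \<ge> 1.\<close>
lemma upper_level_sets_breakpoints:
  fixes f :: "'a \<Rightarrow> real"
  assumes D: "finite D" "D \<noteq> {}" and f_pos: "\<And>i. i \<in> D \<Longrightarrow> 0 < f i"
  obtains j cs As where "1 \<le> j" "j \<le> card D"
    and "\<And>k. 1 \<le> k \<Longrightarrow> k < j \<Longrightarrow> cs (k + 1) < cs k" and "\<And>k. 1 \<le> k \<Longrightarrow> k \<le> j \<Longrightarrow> 0 < cs k"
    and "As 0 = {}" and "\<And>k. k < j \<Longrightarrow> As k \<subset> As (k + 1)" and "As j = D"
    and "\<And>k c. k < j \<Longrightarrow> cs (k + 1) < c \<Longrightarrow> k = 0 \<or> c \<le> cs k \<Longrightarrow> {i \<in> D. c \<le> f i} = As k"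
    and "\<And>k c i. k \<le> j \<Longrightarrow> k = 0 \<or> c \<le> cs k \<Longrightarrow> k = j \<or> cs (k + 1) \<le> c \<Longrightarrow> i \<in> D \<Longrightarrow>
           (i \<in> As k \<longrightarrow> c \<le> f i) \<and> (i \<notin> As k \<longrightarrow> f i \<le> c)"
proof -
  define j where "j = card (f ` D)"
  obtain cs where dec: "\<And>k l. 1 \<le> k \<Longrightarrow> k < l \<Longrightarrow> l \<le> j \<Longrightarrow> cs l < cs k"
    and img: "cs ` {1..j} = f ` D"
    using decreasing_enumeration[of "f ` D"] D unfolding j_def by blast
  define As where "As k = (if k = 0 then {} else {i \<in> D. cs k \<le> f i})" for k
  have j: "1 \<le> j" "j \<le> card D"
    using D by (simp_all add: j_def card_image_le Suc_le_eq card_gt_0_iff)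
  have attained: "\<exists>i\<in>D. f i = cs k" if "k \<in> {1..j}" for k
    using img that by (metis imageE imageI)
  have in_range: "f i \<in> cs ` {1..j}" if "i \<in> D" for i using img that by auto
  have value_bounds: "cs j \<le> f i \<and> f i \<le> cs 1" if "i \<in> D" for i
    by (rule strictly_decreasing_values_between(1)[OF dec in_range[OF that]])
  have gap: "f i \<le> cs (k + 1) \<or> cs k \<le> f i" if "i \<in> D" "1 \<le> k" "k < j" for i k
    by (rule strictly_decreasing_values_between(2)[OF dec in_range[OF that(1)] that(2,3)])
  show ?thesis
  proof (rule that)
    show "1 \<le> j" "j \<le> card D" by (fact j)+
    show "cs (k + 1) < cs k" if "1 \<le> k" "k < j" for k using dec that by simp
    show "0 < cs k" if "1 \<le> k" "k \<le> j" for k using attained[of k] f_pos that by force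
    show "As 0 = {}" by (simp add: As_def)
    show "As j = D" using j value_bounds by (auto simp: As_def)
  next
    fix k assume k: "k < j"
    obtain i0 where i0: "i0 \<in> D" "f i0 = cs (k + 1)" using attained[of "k + 1"] k by auto
    have "As k \<subseteq> As (k + 1)" "i0 \<notin> As k"
      using dec[of k "k + 1"] k i0 by (auto simp: As_def)
    moreover have "i0 \<in> As (k + 1)" using i0 by (simp add: As_def)
    ultimately show "As k \<subset> As (k + 1)" by blast
  next
    fix k c assume k: "k < j" and c: "cs (k + 1) < c" "k = 0 \<or> c \<le> cs k"
    show "{i \<in> D. c \<le> f i} = As k"
    proof (cases "k = 0")
      case True
      then show ?thesis using c value_bounds by (force simp: As_def)
    next
      case False
      have "c \<le> f i \<longleftrightarrow> cs k \<le> f i" if "i \<in> D" for i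
        using gap[OF that, of k] False k c by auto
      then show ?thesis using False by (auto simp: As_def)
    qed
  next
    fix k c i assume k: "k \<le> j" and c: "k = 0 \<or> c \<le> cs k" "k = j \<or> cs (k + 1) \<le> c" and i: "i \<in> D"
    show "(i \<in> As k \<longrightarrow> c \<le> f i) \<and> (i \<notin> As k \<longrightarrow> f i \<le> c)"
    proof (cases "k = 0")
      case True
      then show ?thesis using c j value_bounds[OF i] by (simp add: As_def)
    next
      case False
      then show ?thesis
        using c k i value_bounds[OF i] gap[OF i, of k] by (cases "k < j") (auto simp: As_def)
    qed
  qed
qed

section \<open>Wardrop equilibria in parallel networks\<close>

lemma wardrop_iff:
  "wardrop n a b s x \<longleftrightarrow> (\<forall>i<n. 0 \<le> x i) \<and> (\<forall>i\<ge>n. x i = 0) \<and> (\<Sum>i<n. x i) = 1 \<and>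
     (\<forall>i<n. \<forall>j<n. 0 < x i \<longrightarrow> a i * x i + b i + s i \<le> a j * x j + b j + s j)"
  unfolding wardrop_def feasible_flow_def latency_def by auto

lemma wardrop_common_level:
  assumes "wardrop n a b s x"
  obtains m where "\<And>i. i < n \<Longrightarrow> 0 < x i \<Longrightarrow> a i * x i + b i + s i = m"
    and "\<And>j. j < n \<Longrightarrow> m \<le> a j * x j + b j + s j"
proof -
  have "\<exists>i<n. 0 < x i"
  proof (rule ccontr)
    assume "\<not> (\<exists>i<n. 0 < x i)"
    with assms have "\<forall>i<n. x i = 0" by (force simp: wardrop_iff)
    then have "(\<Sum>i<n. x i) = 0" by simp
    with assms show False by (simp add: wardrop_iff)
  qed
  then obtain i0 where "i0 < n" "0 < x i0" by blast
  with assms show ?thesis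
    by (intro that[of "a i0 * x i0 + b i0 + s i0"]) (auto simp: wardrop_iff intro: order_antisym)
qed

lemma wardrop_variational_inequality:
  assumes x: "wardrop n a b s x" and y: "wardrop n a b s y"
  shows "(\<Sum>i<n. (a i * x i + b i + s i) * x i) \<le> (\<Sum>i<n. (a i * x i + b i + s i) * y i)"
proof -
  obtain m where used: "\<And>i. i < n \<Longrightarrow> 0 < x i \<Longrightarrow> a i * x i + b i + s i = m"
    and level: "\<And>j. j < n \<Longrightarrow> m \<le> a j * x j + b j + s j"
    using wardrop_common_level[OF x] by blast
  have "(\<Sum>i<n. (a i * x i + b i + s i) * x i) = (\<Sum>i<n. m * x i)"
  proof (rule sum.cong)
    fix i assume "i \<in> {..<n}"
    with x used show "(a i * x i + b i + s i) * x i = m * x i"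
      by (cases "0 < x i") (auto simp: wardrop_iff dest: order_antisym)
  qed simp
  also have "\<dots> = (\<Sum>i<n. m * y i)"
    using x y by (simp add: wardrop_iff flip: sum_distrib_left)
  also have "\<dots> \<le> (\<Sum>i<n. (a i * x i + b i + s i) * y i)"
    using y level by (intro sum_mono mult_right_mono) (auto simp: wardrop_iff)
  finally show ?thesis .
qed

lemma affine_flow_quadratic_cost:
  assumes "\<exists>p q. \<forall>c. P c \<longrightarrow> (\<forall>i<n. x c i = p i + c * q i)"
  shows "\<exists>\<alpha> \<beta> \<gamma>. \<forall>c. P c \<longrightarrow> total_cost n a b (x c) = \<alpha> + \<beta> * c + \<gamma> * c^2"
proof -
  obtain p q where pq: "\<And>c i. P c \<Longrightarrow> i < n \<Longrightarrow> x c i = p i + c * q i" using assms by blast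
  have "total_cost n a b (x c) = (\<Sum>i<n. (a i * p i + b i) * p i) + (\<Sum>i<n. 2 * a i * p i * q i + b i * q i) * c
      + (\<Sum>i<n. a i * q i * q i) * c^2" if "P c" for c
  proof -
    have "total_cost n a b (x c)
        = (\<Sum>i<n. (a i * p i + b i) * p i + (2 * a i * p i * q i + b i * q i) * c + a i * q i * q i * c^2)"
      unfolding total_cost_def latency_def using pq[OF that]
      by (intro sum.cong) (auto simp: algebra_simps power2_eq_square)
    then show ?thesis by (simp only: sum_distrib_right[symmetric] sum.distrib)
  qed
  then show ?thesis by blast
qed

lemma toll_eq_zero_cap: "toll_eq n a b 0 t \<Longrightarrow> t = (\<lambda>_. 0)"
proof (rule ext)
  fix i assume "toll_eq n a b 0 t"
  then show "t i = 0" by (cases "i < n") (auto simp: toll_eq_def)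
qed

lemma flow_of_cap_zero:
  assumes "\<exists>!t. toll_eq n a b 0 t"
  shows "flow_of_cap n a b 0 = eq_flow n a b (\<lambda>_. 0)"
proof -
  have "toll_of_cap n a b 0 = (\<lambda>_. 0)"
    unfolding toll_of_cap_def using theI'[OF assms] by (rule toll_eq_zero_cap)
  then show ?thesis by (simp add: flow_of_cap_def)
qed

locale parallel_network =
  fixes n :: nat and a b :: "nat \<Rightarrow> real"
  assumes links_nonempty: "0 < n"
    and slope_pos: "\<And>i. i < n \<Longrightarrow> 0 < a i"
begin

lemma wardrop_unique:
  assumes x: "wardrop n a b s x" and y: "wardrop n a b s y"
  shows "x = y"
proof -
  have "(\<Sum>i<n. a i * (x i - y i)^2)
      = ((\<Sum>i<n. (a i * x i + b i + s i) * x i) - (\<Sum>i<n. (a i * x i + b i + s i) * y i))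
      + ((\<Sum>i<n. (a i * y i + b i + s i) * y i) - (\<Sum>i<n. (a i * y i + b i + s i) * x i))"
    by (simp only: sum_subtractf[symmetric] sum.distrib[symmetric])
      (rule sum.cong, simp_all add: power2_eq_square algebra_simps)
  also have "\<dots> \<le> 0"
    using wardrop_variational_inequality[OF x y] wardrop_variational_inequality[OF y x] by linarith
  finally have "(\<Sum>i<n. a i * (x i - y i)^2) \<le> 0" .
  moreover have nonneg: "\<And>i. i \<in> {..<n} \<Longrightarrow> 0 \<le> a i * (x i - y i)^2"
    using slope_pos by (simp add: less_imp_le)
  ultimately have "(\<Sum>i<n. a i * (x i - y i)^2) = 0"
    by (meson antisym sum_nonneg)
  then have "\<forall>i\<in>{..<n}. a i * (x i - y i)^2 = 0"
    by (subst sum_nonneg_eq_0_iff[symmetric]) (use nonneg in auto)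
  then have "\<forall>i<n. x i = y i"
    using slope_pos by (simp add: less_imp_neq[symmetric])
  show ?thesis
  proof (rule ext)
    fix i show "x i = y i"
      using \<open>\<forall>i<n. x i = y i\<close> x y by (cases "i < n") (auto simp: wardrop_iff)
  qed
qed

lemma water_filling_level:
  "\<exists>v. (\<Sum>j<n. max 0 ((v - b j - s j) / a j)) = 1"
proof -
  define f where "f v = (\<Sum>j<n. max 0 ((v - b j - s j) / a j))" for v
  define lo where "lo = - (\<Sum>j<n. \<bar>b j + s j\<bar>)"
  define hi where "hi = b 0 + s 0 + a 0"
  have a0: "0 < a 0" using slope_pos links_nonempty by auto
  have lo_le: "lo \<le> b j + s j" if "j < n" for j
  proof -
    have "\<bar>b j + s j\<bar> \<le> (\<Sum>j<n. \<bar>b j + s j\<bar>)"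
      by (rule member_le_sum) (use that in auto)
    then show ?thesis unfolding lo_def by linarith
  qed
  have "f lo = 0" unfolding f_def
  proof (intro sum.neutral ballI)
    fix j assume "j \<in> {..<n}"
    then have "(lo - b j - s j) / a j \<le> 0" using lo_le[of j] slope_pos[of j] by (simp add: divide_le_0_iff)
    then show "max 0 ((lo - b j - s j) / a j) = 0" by simp
  qed
  moreover have "1 \<le> f hi"
  proof -
    have "max 0 ((hi - b 0 - s 0) / a 0) \<le> f hi" unfolding f_def
      by (rule member_le_sum[where f="\<lambda>j. max 0 ((hi - b j - s j) / a j)"]) (use links_nonempty in auto)
    moreover have "(hi - b 0 - s 0) / a 0 = 1" using a0 unfolding hi_def by simp
    ultimately show ?thesis by simp
  qed
  moreover have "lo \<le> hi" using lo_le[of 0] links_nonempty a0 unfolding hi_def by simp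
  moreover have "continuous_on {lo..hi} f" unfolding f_def
    by (intro continuous_intros) (use slope_pos in fastforce)
  ultimately obtain v where "f v = 1" using IVT'[of f lo 1 hi] by auto
  then show ?thesis unfolding f_def by blast
qed

lemma wardrop_exists: "\<exists>x. wardrop n a b s x"
proof -
  obtain v where v: "(\<Sum>j<n. max 0 ((v - b j - s j) / a j)) = 1" using water_filling_level by blast
  define x where "x j = (if j < n then max 0 ((v - b j - s j) / a j) else 0)" for j
  have "wardrop n a b s x"
    unfolding wardrop_iff
  proof (intro conjI allI impI)
    show "(\<Sum>i<n. x i) = 1" using v unfolding x_def by simp
  next
    fix i j assume i: "i < n" and j: "j < n" and pos: "0 < x i"
    have "a i * x i + b i + s i = v"
      using pos slope_pos[OF i] i unfolding x_def by (auto simp: max_def split: if_splits)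
    moreover have "v \<le> a j * x j + b j + s j"
      using slope_pos[OF j] j unfolding x_def by (auto simp: max_def field_simps)
    ultimately show "a i * x i + b i + s i \<le> a j * x j + b j + s j" by simp
  qed (auto simp: x_def)
  then show ?thesis by blast
qed

lemma eq_flow_wardrop: "wardrop n a b s (eq_flow n a b s)"
  unfolding eq_flow_def using wardrop_exists wardrop_unique by (metis theI)

lemma eq_flow_eqI: "wardrop n a b s x \<Longrightarrow> eq_flow n a b s = x"
  using eq_flow_wardrop wardrop_unique by blast

lemma wardrop_le_common_level_flow:
  assumes x: "wardrop n a b s x" and z_sum: "(\<Sum>j<n. z j) = 1"
    and z_level: "\<And>j. j < n \<Longrightarrow> a j * z j + b j + s j = \<mu>" and i: "i < n"
  shows "x i \<le> max 0 (z i)"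
proof -
  obtain m where used: "\<And>i. i < n \<Longrightarrow> 0 < x i \<Longrightarrow> a i * x i + b i + s i = m"
    and level: "\<And>j. j < n \<Longrightarrow> m \<le> a j * x j + b j + s j"
    using wardrop_common_level[OF x] by blast
  have "m \<le> \<mu>"
  proof (rule ccontr)
    assume "\<not> m \<le> \<mu>"
    have "z j < x j" if j: "j < n" for j
    proof (cases "0 < x j")
      case True
      then have "a j * z j < a j * x j" using used[OF j] z_level[OF j] \<open>\<not> m \<le> \<mu>\<close> by linarith
      then show ?thesis using slope_pos[OF j] by simp
    next
      case False
      then have "x j = 0" using x j by (force simp: wardrop_iff)
      then have "m \<le> b j + s j" using level[OF j] by simp
      then have "a j * z j < 0" using z_level[OF j] \<open>\<not> m \<le> \<mu>\<close> by linarith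
      then show ?thesis using slope_pos[OF j] \<open>x j = 0\<close> by (simp add: mult_less_0_iff)
    qed
    then have "(\<Sum>j<n. z j) < (\<Sum>j<n. x j)" using links_nonempty by (intro sum_strict_mono) auto
    then show False using z_sum x by (simp add: wardrop_iff)
  qed
  show ?thesis
  proof (cases "0 < x i")
    case True
    then have "a i * x i \<le> a i * z i" using used[OF i] z_level[OF i] \<open>m \<le> \<mu>\<close> by linarith
    then show ?thesis using slope_pos[OF i] by simp
  qed simp
qed

end

section \<open>The capped toll equilibrium\<close>

locale capped_network = parallel_network +
  assumes two_links: "2 \<le> n"
    and untolled_flow_pos: "\<And>i. i < n \<Longrightarrow> 0 < eq_flow n a b (\<lambda>_. 0) i"
begin

abbreviation untolled_flow :: "nat \<Rightarrow> real" where
  "untolled_flow \<equiv> eq_flow n a b (\<lambda>_. 0)"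

definition slope_inv_sum :: real where
  "slope_inv_sum = (\<Sum>j<n. 1 / a j)"

text \<open>If every link is used, raising the toll of link i by d raises the common cost level by
  d / (a i * slope_inv_sum), so link i loses (markup i - 1) * d / a i of its flow. Maximising the
  profit against a level \<lambda> therefore gives the toll (\<lambda> - b i) / markup i, capped at c.\<close>
definition markup :: "nat \<Rightarrow> real" where
  "markup i = 2 - 1 / (a i * slope_inv_sum)"

definition capped_toll :: "real \<Rightarrow> real \<Rightarrow> nat \<Rightarrow> real" where
  "capped_toll l c i = min c ((l - b i) / markup i)"

definition level_flow :: "real \<Rightarrow> real \<Rightarrow> nat \<Rightarrow> real" where
  "level_flow l c i = (l - b i - capped_toll l c i) / a i"

definition total_level_flow :: "real \<Rightarrow> real \<Rightarrow> real" where
  "total_level_flow l c = (\<Sum>i<n. level_flow l c i)"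

lemma slope_inv_sum_gt:
  assumes i: "i < n"
  shows "1 / a i < slope_inv_sum"
proof -
  define k where "k = (if i = 0 then 1 else 0 :: nat)"
  have k: "k < n" "k \<noteq> i" using two_links by (auto simp: k_def)
  have "slope_inv_sum = 1 / a i + (\<Sum>j\<in>{..<n} - {i}. 1 / a j)"
    unfolding slope_inv_sum_def using i by (subst sum.remove[of _ i]) auto
  moreover have "0 < (\<Sum>j\<in>{..<n} - {i}. 1 / a j)"
    using k slope_pos by (intro sum_pos) auto
  ultimately show ?thesis by simp
qed

lemma slope_inv_sum_pos: "0 < slope_inv_sum"
  using slope_inv_sum_gt[of 0] slope_pos[of 0] links_nonempty by (meson less_trans zero_less_divide_1_iff)

lemma markup_gt_one:
  assumes "i < n"
  shows "1 < markup i"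
proof -
  have "1 < a i * slope_inv_sum"
    using slope_inv_sum_gt[OF assms] slope_pos[OF assms] by (simp add: field_simps)
  then show ?thesis unfolding markup_def by (simp add: field_simps)
qed

lemma level_flow_strict_mono:
  assumes i: "i < n" and "l < l'"
  shows "level_flow l c i < level_flow l' c i"
proof -
  have m: "1 < markup i" using markup_gt_one[OF i] .
  have "(l - b i) / markup i \<le> (l' - b i) / markup i"
    using m \<open>l < l'\<close> by (intro divide_right_mono) auto
  moreover have "(l' - b i) / markup i - (l - b i) / markup i = (l' - l) / markup i"
    by (simp add: diff_divide_distrib)
  moreover have "(l' - l) / markup i < l' - l" using m \<open>l < l'\<close> by (simp add: divide_less_eq)
  ultimately have "capped_toll l' c i - capped_toll l c i < l' - l"
    unfolding capped_toll_def by (auto simp: min_def)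
  then show ?thesis
    unfolding level_flow_def using slope_pos[OF i] by (simp add: divide_strict_right_mono)
qed

lemma level_flow_antimono:
  assumes "i < n" "c \<le> c'"
  shows "level_flow l c' i \<le> level_flow l c i"
  unfolding level_flow_def capped_toll_def
  using assms slope_pos[of i] by (intro divide_right_mono) (auto simp: min_def)

lemma level_flow_shift:
  assumes i: "i < n" and d: "0 \<le> d"
  shows "level_flow l c i \<le> level_flow (l + d) (c + d) i"
proof -
  have m: "1 < markup i" using markup_gt_one[OF i] .
  have "d * 1 \<le> d * markup i" using m d by (intro mult_left_mono) auto
  then have "d / markup i \<le> d" using m by (simp add: divide_le_eq)
  moreover have "(l + d - b i) / markup i = (l - b i) / markup i + d / markup i"
    by (simp add: add_divide_distrib[symmetric])
  ultimately have "capped_toll (l + d) (c + d) i \<le> capped_toll l c i + d"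
    unfolding capped_toll_def by (auto simp: min_def)
  then show ?thesis
    unfolding level_flow_def using slope_pos[OF i] by (intro divide_right_mono) auto
qed

lemma total_level_flow_strict_mono: "l < l' \<Longrightarrow> total_level_flow l c < total_level_flow l' c"
  unfolding total_level_flow_def using level_flow_strict_mono links_nonempty by (intro sum_strict_mono) auto

lemma total_level_flow_antimono: "c \<le> c' \<Longrightarrow> total_level_flow l c' \<le> total_level_flow l c"
  unfolding total_level_flow_def using level_flow_antimono by (intro sum_mono) auto

lemma total_level_flow_shift: "0 \<le> d \<Longrightarrow> total_level_flow l c \<le> total_level_flow (l + d) (c + d)"
  unfolding total_level_flow_def using level_flow_shift by (intro sum_mono) auto

lemma total_level_flow_continuous: "continuous_on A (\<lambda>l. total_level_flow l c)"
proof -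
  have "markup i \<noteq> 0" "a i \<noteq> 0" if "i < n" for i
    using markup_gt_one[OF that] slope_pos[OF that] by auto
  then show ?thesis
    unfolding total_level_flow_def level_flow_def capped_toll_def by (intro continuous_intros) auto
qed

definition untolled_level :: real where
  "untolled_level = a 0 * untolled_flow 0 + b 0"

lemma untolled_flow_eq:
  assumes i: "i < n"
  shows "untolled_flow i = (untolled_level - b i) / a i"
proof -
  obtain m where "\<And>i. i < n \<Longrightarrow> a i * untolled_flow i + b i = m"
    using wardrop_common_level[OF eq_flow_wardrop, of "\<lambda>_. 0"] untolled_flow_pos
    by (metis add.right_neutral)
  then have "a i * untolled_flow i + b i = untolled_level"
    using i links_nonempty unfolding untolled_level_def by simp
  then show ?thesis using slope_pos[OF i] by (simp add: field_simps)
qed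

lemma b_less_untolled_level:
  assumes i: "i < n"
  shows "b i < untolled_level"
proof -
  have "0 < (untolled_level - b i) / a i" using untolled_flow_eq[OF i] untolled_flow_pos[OF i] by simp
  then show ?thesis using slope_pos[OF i] by (simp add: zero_less_divide_iff)
qed

lemma untolled_level_sum: "(\<Sum>i<n. (untolled_level - b i) / a i) = 1"
proof -
  have "(\<Sum>i<n. (untolled_level - b i) / a i) = (\<Sum>i<n. untolled_flow i)"
    using untolled_flow_eq by simp
  also have "\<dots> = 1" using eq_flow_wardrop by (simp add: wardrop_iff)
  finally show ?thesis .
qed

lemma total_level_flow_untolled_le:
  assumes "0 \<le> c"
  shows "total_level_flow untolled_level c \<le> 1"
  unfolding untolled_level_sum[symmetric] total_level_flow_def
proof (rule sum_mono)
  fix i assume "i \<in> {..<n}"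
  then have i: "i < n" by simp
  have "0 < (untolled_level - b i) / markup i"
    using b_less_untolled_level[OF i] markup_gt_one[OF i] by simp
  then have "0 \<le> capped_toll untolled_level c i" unfolding capped_toll_def using assms by simp
  then show "level_flow untolled_level c i \<le> (untolled_level - b i) / a i"
    unfolding level_flow_def using slope_pos[OF i] by (intro divide_right_mono) auto
qed

lemma total_level_flow_shifted_ge: "1 \<le> total_level_flow (untolled_level + c) c"
  unfolding untolled_level_sum[symmetric] total_level_flow_def level_flow_def capped_toll_def
  using slope_pos by (intro sum_mono divide_right_mono) (auto simp: less_imp_le)

definition level :: "real \<Rightarrow> real" where
  "level c = (THE l. total_level_flow l c = 1)"

lemma level_eqI:
  assumes "total_level_flow l c = 1"
  shows "level c = l"
  unfolding level_def
proof (rule the_equality)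
  show "total_level_flow l c = 1" by (fact assms)
  fix l' assume "total_level_flow l' c = 1"
  with assms show "l' = l"
    using total_level_flow_strict_mono[of l l' c] total_level_flow_strict_mono[of l' l c]
    by (cases l l' rule: linorder_cases) auto
qed

lemma level_bounds:
  assumes "0 \<le> c"
  shows "total_level_flow (level c) c = 1" and "untolled_level \<le> level c"
    and "level c \<le> untolled_level + c"
proof -
  obtain l where "untolled_level \<le> l" "l \<le> untolled_level + c" "total_level_flow l c = 1"
    using IVT'[of "\<lambda>l. total_level_flow l c" untolled_level 1 "untolled_level + c"] assms
      total_level_flow_untolled_le total_level_flow_shifted_ge total_level_flow_continuous
    by auto
  with level_eqI show "total_level_flow (level c) c = 1" "untolled_level \<le> level c"
    "level c \<le> untolled_level + c" by auto
qed

lemma level_zero: "level 0 = untolled_level"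
  using level_bounds[of 0] by simp

lemma level_increments:
  assumes "0 \<le> c" "c \<le> c'"
  shows "level c \<le> level c'" and "level c' \<le> level c + (c' - c)"
proof -
  have flow: "total_level_flow (level c) c = 1" "total_level_flow (level c') c' = 1"
    using level_bounds assms by auto
  show "level c \<le> level c'"
  proof (rule ccontr)
    assume "\<not> level c \<le> level c'"
    then have "total_level_flow (level c') c' < total_level_flow (level c) c'"
      by (simp add: total_level_flow_strict_mono)
    also have "\<dots> \<le> total_level_flow (level c) c" using total_level_flow_antimono assms by simp
    finally show False using flow by simp
  qed
  show "level c' \<le> level c + (c' - c)"
  proof (rule ccontr)
    assume "\<not> level c' \<le> level c + (c' - c)"
    then have "total_level_flow (level c + (c' - c)) c' < total_level_flow (level c') c'"
      by (simp add: total_level_flow_strict_mono)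
    moreover have "total_level_flow (level c) c \<le> total_level_flow (level c + (c' - c)) (c + (c' - c))"
      using assms by (intro total_level_flow_shift) simp
    ultimately show False using flow by simp
  qed
qed

lemma level_continuous: "continuous_on {0..} level"
proof (rule lipschitz_on_continuous_on)
  show "lipschitz_on 1 {0..} level"
  proof (rule lipschitz_onI)
    fix x y :: real assume "x \<in> {0..}" "y \<in> {0..}"
    then show "dist (level x) (level y) \<le> 1 * dist x y"
      using level_increments[of x y] level_increments[of y x]
      by (cases "x \<le> y") (auto simp: dist_real_def)
  qed simp
qed

definition cap_toll :: "real \<Rightarrow> nat \<Rightarrow> real" where
  "cap_toll c i = (if i < n then capped_toll (level c) c i else 0)"

definition cap_flow :: "real \<Rightarrow> nat \<Rightarrow> real" where
  "cap_flow c i = (if i < n then level_flow (level c) c i else 0)"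

lemma cap_flow_eq: "i < n \<Longrightarrow> cap_flow c i = (level c - b i - cap_toll c i) / a i"
  unfolding cap_flow_def cap_toll_def level_flow_def by simp

lemma uncapped_toll_bounds:
  assumes "0 \<le> c" "i < n"
  shows "0 < (level c - b i) / markup i" and "(level c - b i) / markup i \<le> level c - b i"
proof -
  have pos: "0 < level c - b i" and m: "1 < markup i"
    using level_bounds(2)[of c] b_less_untolled_level[of i] markup_gt_one assms by auto
  then show "0 < (level c - b i) / markup i" by simp
  from pos m have "(level c - b i) * 1 \<le> (level c - b i) * markup i" by (intro mult_left_mono) auto
  with m show "(level c - b i) / markup i \<le> level c - b i" by (simp add: divide_le_eq)
qed

lemma cap_toll_bounds: "0 \<le> c \<Longrightarrow> i < n \<Longrightarrow> 0 \<le> cap_toll c i \<and> cap_toll c i \<le> c"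
  using uncapped_toll_bounds(1)[of c i] unfolding cap_toll_def capped_toll_def by auto

lemma cap_flow_nonneg: "0 \<le> c \<Longrightarrow> i < n \<Longrightarrow> 0 \<le> cap_flow c i"
  using uncapped_toll_bounds(2)[of c i] slope_pos[of i]
  unfolding cap_flow_def level_flow_def capped_toll_def by (auto simp: min_def)

lemma cap_flow_level: "i < n \<Longrightarrow> a i * cap_flow c i + b i + cap_toll c i = level c"
  using slope_pos[of i] unfolding cap_flow_def cap_toll_def level_flow_def by simp

lemma cap_flow_sum: "0 \<le> c \<Longrightarrow> (\<Sum>i<n. cap_flow c i) = 1"
  using level_bounds(1)[of c] unfolding total_level_flow_def cap_flow_def by simp

lemma cap_flow_wardrop: "0 \<le> c \<Longrightarrow> wardrop n a b (cap_toll c) (cap_flow c)"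
  unfolding wardrop_iff using cap_flow_nonneg cap_flow_sum cap_flow_level
  by (simp add: cap_flow_def)

lemma eq_flow_cap_toll: "0 \<le> c \<Longrightarrow> eq_flow n a b (cap_toll c) = cap_flow c"
  by (rule eq_flow_eqI[OF cap_flow_wardrop])

definition loss_rate :: "nat \<Rightarrow> real" where
  "loss_rate i = (markup i - 1) / a i"

lemma loss_rate_pos: "i < n \<Longrightarrow> 0 < loss_rate i"
  using markup_gt_one[of i] slope_pos[of i] unfolding loss_rate_def by simp

text \<open>Below the cap, cap_flow c i = loss_rate i * cap_toll c i and the difference of the two sides
  is loss_rate i * (t' - cap_toll c i)^2; at the cap, cap_flow c i \<ge> loss_rate i * c.\<close>
lemma cap_toll_best_response:
  assumes c: "0 \<le> c" and i: "i < n" and t': "0 \<le> t'" "t' \<le> c"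
  shows "t' * (cap_flow c i - loss_rate i * (t' - cap_toll c i)) \<le> cap_toll c i * cap_flow c i"
proof (cases "c \<le> (level c - b i) / markup i")
  case True
  then have t: "cap_toll c i = c" unfolding cap_toll_def capped_toll_def using i by simp
  have m: "1 < markup i" and ai: "0 < a i" using markup_gt_one[OF i] slope_pos[OF i] by auto
  have "c * markup i \<le> level c - b i" using True m by (simp add: le_divide_eq)
  then have "a i * (c * markup i) \<le> a i * (level c - b i)" using ai by (intro mult_left_mono) auto
  then have "loss_rate i * c \<le> cap_flow c i"
    unfolding loss_rate_def cap_flow_def level_flow_def using t i ai by (simp add: field_simps cap_toll_def)
  moreover have "loss_rate i * t' \<le> loss_rate i * c"
    using loss_rate_pos[OF i] t' by (intro mult_left_mono) auto
  ultimately have "0 \<le> (c - t') * (cap_flow c i - loss_rate i * t')"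
    using t' by (intro mult_nonneg_nonneg) auto
  then show ?thesis unfolding t by (simp add: algebra_simps)
next
  case False
  then have t: "cap_toll c i = (level c - b i) / markup i"
    unfolding cap_toll_def capped_toll_def using i by simp
  have m: "1 < markup i" and ai: "0 < a i" using markup_gt_one[OF i] slope_pos[OF i] by auto
  have x: "cap_flow c i = loss_rate i * cap_toll c i"
    unfolding cap_flow_def level_flow_def loss_rate_def using t i m ai
    by (simp add: field_simps cap_toll_def)
  have "0 \<le> loss_rate i * (cap_toll c i - t')^2" using loss_rate_pos[OF i] by simp
  then show ?thesis unfolding x by (simp add: power2_eq_square algebra_simps)
qed

lemma deviation_flow_le:
  assumes c: "0 \<le> c" and i: "i < n"
  shows "eq_flow n a b ((cap_toll c)(i := t')) i \<le> max 0 (cap_flow c i - loss_rate i * (t' - cap_toll c i))"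
proof -
  define d where "d = t' - cap_toll c i"
  define \<delta> where "\<delta> = d / (a i * slope_inv_sum)"
  \<comment> \<open>z puts all links at the common level level c + \<delta>, allowing negative flows\<close>
  define z where "z j = cap_flow c j + (\<delta> - (if j = i then d else 0)) / a j" for j
  have ai: "0 < a i" using slope_pos[OF i] .
  have "z j = cap_flow c j + \<delta> * (1 / a j) - (if j = i then d / a j else 0)" for j
    unfolding z_def by (simp add: diff_divide_distrib)
  then have "(\<Sum>j<n. z j) = (\<Sum>j<n. cap_flow c j) + \<delta> * slope_inv_sum - d / a i"
    unfolding slope_inv_sum_def using i by (simp add: sum.distrib sum_subtractf sum_distrib_left)
  also have "\<dots> = 1" unfolding \<delta>_def using cap_flow_sum[OF c] slope_inv_sum_pos ai by simp
  finally have "(\<Sum>j<n. z j) = 1" .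
  moreover have "a j * z j + b j + ((cap_toll c)(i := t')) j = level c + \<delta>" if j: "j < n" for j
  proof -
    have "a j * z j = a j * cap_flow c j + \<delta> - (if j = i then d else 0)"
      unfolding z_def using slope_pos[OF j] by (simp add: field_simps)
    then show ?thesis using cap_flow_level[OF j, of c] unfolding d_def by auto
  qed
  moreover have "z i = cap_flow c i - loss_rate i * (t' - cap_toll c i)"
    unfolding z_def \<delta>_def loss_rate_def markup_def d_def using ai slope_inv_sum_pos
    by (simp add: field_simps)
  ultimately show ?thesis
    using wardrop_le_common_level_flow[OF eq_flow_wardrop _ _ i] by metis
qed

lemma toll_eq_cap_toll:
  assumes c: "0 \<le> c"
  shows "toll_eq n a b c (cap_toll c)"
  unfolding toll_eq_def
proof (intro conjI allI impI)
  fix i t' assume i: "i < n" and t': "0 \<le> t' \<and> t' \<le> c"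
  have "profit n a b ((cap_toll c)(i := t')) i = t' * eq_flow n a b ((cap_toll c)(i := t')) i"
    unfolding profit_def by simp
  also have "\<dots> \<le> t' * max 0 (cap_flow c i - loss_rate i * (t' - cap_toll c i))"
    using deviation_flow_le[OF c i] t' by (intro mult_left_mono) auto
  also have "\<dots> \<le> cap_toll c i * cap_flow c i"
    using cap_toll_best_response[OF c i] cap_toll_bounds[OF c i] cap_flow_nonneg[OF c i] t'
    by (cases "0 \<le> cap_flow c i - loss_rate i * (t' - cap_toll c i)") auto
  also have "\<dots> = profit n a b (cap_toll c) i"
    unfolding profit_def eq_flow_cap_toll[OF c] ..
  finally show "profit n a b ((cap_toll c)(i := t')) i \<le> profit n a b (cap_toll c) i" .
qed (use cap_toll_bounds c in \<open>auto simp: cap_toll_def\<close>)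

section \<open>Capping thresholds and affine pieces\<close>

definition cap_slack :: "nat \<Rightarrow> real \<Rightarrow> real" where
  "cap_slack i c = (level c - b i) / markup i - c"

lemma cap_slack_strict_antimono:
  assumes "0 \<le> c" "c < c'" "i < n"
  shows "cap_slack i c' < cap_slack i c"
proof -
  have m: "1 < markup i" using markup_gt_one assms by simp
  have "(level c' - b i) / markup i \<le> (level c + (c' - c) - b i) / markup i"
    using level_increments(2)[of c c'] m assms by (intro divide_right_mono) auto
  also have "\<dots> = (level c - b i) / markup i + (c' - c) / markup i"
    by (simp add: add_divide_distrib[symmetric])
  finally have "(level c' - b i) / markup i \<le> (level c - b i) / markup i + (c' - c) / markup i" .
  moreover have "(c' - c) * 1 < (c' - c) * markup i" using m assms by (intro mult_strict_left_mono) auto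
  then have "(c' - c) / markup i < c' - c" using m by (simp add: divide_less_eq)
  ultimately show ?thesis unfolding cap_slack_def by linarith
qed

lemma cap_slack_has_root:
  assumes i: "i < n"
  shows "\<exists>z>0. cap_slack i z = 0"
proof -
  have m: "1 < markup i" and bl: "b i < untolled_level"
    using markup_gt_one[OF i] b_less_untolled_level[OF i] by auto
  define C where "C = (untolled_level - b i) / (markup i - 1) + 1"
  have C: "0 \<le> C" unfolding C_def using m bl by simp
  have pos: "0 < cap_slack i 0" unfolding cap_slack_def level_zero using m bl by simp
  have "(markup i - 1) * C = untolled_level - b i + (markup i - 1)"
    unfolding C_def using m by (simp add: field_simps)
  then have "untolled_level + C - b i < C * markup i" using m by (simp add: algebra_simps)
  then have "(untolled_level + C - b i) / markup i - C < 0" using m by (simp add: divide_less_eq)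
  moreover have "cap_slack i C \<le> (untolled_level + C - b i) / markup i - C"
    unfolding cap_slack_def using level_bounds(3)[OF C] m by (auto intro!: divide_right_mono)
  ultimately have neg: "cap_slack i C < 0" by linarith
  have "continuous_on {0..C} (cap_slack i)"
    unfolding cap_slack_def using m
    by (intro continuous_intros continuous_on_subset[OF level_continuous]) auto
  then obtain z where "0 \<le> z" "cap_slack i z = 0"
    using IVT2'[of "cap_slack i" C 0 0] neg pos C by auto
  moreover from this have "z \<noteq> 0" using pos by auto
  ultimately show ?thesis by (intro exI[of _ z]) auto
qed

definition cap_threshold :: "nat \<Rightarrow> real" where
  "cap_threshold i = (SOME z. 0 < z \<and> cap_slack i z = 0)"

lemma cap_threshold_root: "i < n \<Longrightarrow> 0 < cap_threshold i \<and> cap_slack i (cap_threshold i) = 0"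
  unfolding cap_threshold_def by (rule someI_ex) (rule cap_slack_has_root)

lemma cap_slack_sign:
  assumes "i < n" "0 \<le> c"
  shows "0 \<le> cap_slack i c \<longleftrightarrow> c \<le> cap_threshold i"
    and "cap_slack i c \<le> 0 \<longleftrightarrow> cap_threshold i \<le> c"
proof -
  have dec: "\<And>x y. x \<in> {0..} \<Longrightarrow> y \<in> {0..} \<Longrightarrow> x < y \<Longrightarrow> cap_slack i y < cap_slack i x"
    using cap_slack_strict_antimono assms(1) by simp
  have root: "cap_threshold i \<in> {0..}" "cap_slack i (cap_threshold i) = 0" "c \<in> {0..}"
    using cap_threshold_root[OF assms(1)] assms(2) by auto
  show "0 \<le> cap_slack i c \<longleftrightarrow> c \<le> cap_threshold i"
    by (rule strictly_decreasing_sign(1)[where g = "cap_slack i", OF dec root])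
  show "cap_slack i c \<le> 0 \<longleftrightarrow> cap_threshold i \<le> c"
    by (rule strictly_decreasing_sign(2)[where g = "cap_slack i", OF dec root])
qed

lemma cap_toll_eq_cap_iff: "i < n \<Longrightarrow> 0 \<le> c \<Longrightarrow> cap_toll c i = c \<longleftrightarrow> c \<le> cap_threshold i"
  using cap_slack_sign(1)[of i c] unfolding cap_toll_def capped_toll_def cap_slack_def
  by (auto simp: min_def)

lemma cap_toll_beyond_threshold:
  "i < n \<Longrightarrow> 0 \<le> c \<Longrightarrow> cap_threshold i \<le> c \<Longrightarrow> cap_toll c i = (level c - b i) / markup i"
  using cap_slack_sign(2)[of i c] unfolding cap_toll_def capped_toll_def cap_slack_def
  by (auto simp: min_def)

lemma cap_flow_by_capped_set:
  assumes c: "0 \<le> c" and i: "i < n"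
    and A: "(i \<in> A \<longrightarrow> c \<le> cap_threshold i) \<and> (i \<notin> A \<longrightarrow> cap_threshold i \<le> c)"
  shows "cap_flow c i =
    ((level c - b i) * (if i \<in> A then 1 else 1 - 1 / markup i) - c * (if i \<in> A then 1 else 0)) / a i"
proof (cases "i \<in> A")
  case True
  then have "cap_toll c i = c" using cap_toll_eq_cap_iff[OF i c] A by simp
  with True show ?thesis by (simp add: cap_flow_eq[OF i])
next
  case False
  then have "cap_toll c i = (level c - b i) / markup i" using cap_toll_beyond_threshold[OF i c] A by simp
  with False show ?thesis by (simp add: cap_flow_eq[OF i] right_diff_distrib)
qed

text \<open>While the capped set A stays fixed, the flows are affine in the level and in c, and the unit
  demand makes the level affine in c. If no link or every link is capped, c only shifts the level,
  so the flows do not move.\<close>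
lemma cap_flow_affine_on:
  assumes nonneg: "\<And>c. P c \<Longrightarrow> 0 \<le> c"
    and pattern: "\<And>c i. P c \<Longrightarrow> i < n \<Longrightarrow>
      (i \<in> A \<longrightarrow> c \<le> cap_threshold i) \<and> (i \<notin> A \<longrightarrow> cap_threshold i \<le> c)"
  shows "\<exists>p q. (\<forall>c. P c \<longrightarrow> (\<forall>i<n. cap_flow c i = p i + c * q i))
    \<and> (A \<inter> {..<n} = {} \<or> {..<n} \<subseteq> A \<longrightarrow> (\<forall>i<n. q i = 0))"
proof -
  define \<omega> where "\<omega> i = (if i \<in> A then 1 else 1 - 1 / markup i)" for i
  define \<epsilon> where "\<epsilon> i = (if i \<in> A then 1 else 0 :: real)" for i
  define W where "W = (\<Sum>i<n. \<omega> i / a i)"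
  define E where "E = (\<Sum>i<n. \<epsilon> i / a i)"
  define K where "K = (\<Sum>i<n. b i * \<omega> i / a i)"
  have "0 < \<omega> i / a i" if "i < n" for i
    using markup_gt_one[OF that] slope_pos[OF that] unfolding \<omega>_def by simp
  then have W: "0 < W" unfolding W_def using links_nonempty by (intro sum_pos) auto
  have flow: "cap_flow c i = ((level c - b i) * \<omega> i - c * \<epsilon> i) / a i" if "P c" "i < n" for c i
    unfolding \<omega>_def \<epsilon>_def by (rule cap_flow_by_capped_set[OF nonneg[OF that(1)] that(2) pattern[OF that]])
  have level: "level c - b i = ((1 + K) / W - b i) + c * (E / W)" if c: "P c" for c i
  proof -
    have "1 = (\<Sum>i<n. cap_flow c i)" using cap_flow_sum nonneg[OF c] by simp
    also have "\<dots> = (\<Sum>i<n. level c * (\<omega> i / a i) - c * (\<epsilon> i / a i) - b i * \<omega> i / a i)"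
      by (intro sum.cong) (simp_all add: flow[OF c] algebra_simps diff_divide_distrib add_divide_distrib)
    also have "\<dots> = level c * W - c * E - K" unfolding W_def E_def K_def
      by (simp add: sum_subtractf sum_distrib_left)
    finally have "level c = (1 + K + c * E) / W" using W by (simp add: field_simps)
    then show ?thesis by (simp add: add_divide_distrib)
  qed
  show ?thesis
  proof (rule exI[of _ "\<lambda>i. ((1 + K) / W - b i) * \<omega> i / a i"],
      rule exI[of _ "\<lambda>i. (E / W * \<omega> i - \<epsilon> i) / a i"], intro conjI allI impI)
    fix c i assume "P c" "i < n"
    then show "cap_flow c i = ((1 + K) / W - b i) * \<omega> i / a i + c * ((E / W * \<omega> i - \<epsilon> i) / a i)"
      using flow level by (simp add: algebra_simps add_divide_distrib diff_divide_distrib)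
  next
    fix i assume extreme: "A \<inter> {..<n} = {} \<or> {..<n} \<subseteq> A" and "i < n"
    have "E = 0" if "A \<inter> {..<n} = {}"
      unfolding E_def \<epsilon>_def using that by (intro sum.neutral) auto
    moreover have "E = W" if "{..<n} \<subseteq> A"
      unfolding E_def W_def \<epsilon>_def \<omega>_def using that by (intro sum.cong) auto
    ultimately show "(E / W * \<omega> i - \<epsilon> i) / a i = 0"
      using extreme \<open>i < n\<close> W unfolding \<epsilon>_def \<omega>_def by auto
  qed
qed

lemma total_cost_cap_flow_continuous: "continuous_on {0..} (\<lambda>c. total_cost n a b (cap_flow c))"
proof -
  have "markup i \<noteq> 0" "a i \<noteq> 0" if "i < n" for i
    using markup_gt_one[OF that] slope_pos[OF that] by auto
  then have "continuous_on {0..} (\<lambda>c. \<Sum>i<n. (a i * level_flow (level c) c i + b i) * level_flow (level c) c i)"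
    unfolding level_flow_def capped_toll_def by (intro continuous_intros level_continuous) auto
  then show ?thesis unfolding total_cost_def latency_def cap_flow_def by simp
qed

end

locale capped_market = capped_network +
  assumes unique_toll_eq: "\<And>c. 0 \<le> c \<Longrightarrow> \<exists>!t. toll_eq n a b c t"
begin

lemma toll_of_cap_eq:
  assumes "0 \<le> c"
  shows "toll_of_cap n a b c = cap_toll c"
  unfolding toll_of_cap_def using unique_toll_eq[OF assms] toll_eq_cap_toll[OF assms] by (metis the1_equality)

lemma flow_of_cap_eq: "0 \<le> c \<Longrightarrow> flow_of_cap n a b c = cap_flow c"
  by (simp add: flow_of_cap_def toll_of_cap_eq eq_flow_cap_toll)

lemma capped_set_eq:
  assumes "0 \<le> c"
  shows "capped_set n a b c = {i \<in> {..<n}. c \<le> cap_threshold i}"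
  unfolding capped_set_def using assms by (auto simp: toll_of_cap_eq cap_toll_eq_cap_iff)

lemma flow_of_cap_affine_on:
  assumes nonneg: "\<And>c. P c \<Longrightarrow> 0 \<le> c"
    and pattern: "\<And>c i. P c \<Longrightarrow> i < n \<Longrightarrow>
      (i \<in> A \<longrightarrow> c \<le> cap_threshold i) \<and> (i \<notin> A \<longrightarrow> cap_threshold i \<le> c)"
  shows "\<exists>p q. \<forall>c. P c \<longrightarrow> (\<forall>i<n. flow_of_cap n a b c i = p i + c * q i)"
proof -
  obtain p q where pq: "\<forall>c. P c \<longrightarrow> (\<forall>i<n. cap_flow c i = p i + c * q i)"
    using cap_flow_affine_on[OF nonneg pattern] by blast
  have "flow_of_cap n a b c i = p i + c * q i" if "P c" "i < n" for c i
    using pq that flow_of_cap_eq[OF nonneg[OF that(1)]] by simp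
  then show ?thesis by blast
qed

lemma flow_of_cap_constant_on:
  assumes nonneg: "\<And>c. P c \<Longrightarrow> 0 \<le> c"
    and pattern: "\<And>c i. P c \<Longrightarrow> i < n \<Longrightarrow>
      (i \<in> A \<longrightarrow> c \<le> cap_threshold i) \<and> (i \<notin> A \<longrightarrow> cap_threshold i \<le> c)"
    and extreme: "A \<inter> {..<n} = {} \<or> {..<n} \<subseteq> A" and "P c\<^sub>0"
  shows "\<forall>c. P c \<longrightarrow> (\<forall>i<n. flow_of_cap n a b c i = flow_of_cap n a b c\<^sub>0 i)"
proof -
  obtain p q where pq: "\<forall>c. P c \<longrightarrow> (\<forall>i<n. cap_flow c i = p i + c * q i)"
    and "A \<inter> {..<n} = {} \<or> {..<n} \<subseteq> A \<longrightarrow> (\<forall>i<n. q i = 0)"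
    using cap_flow_affine_on[OF nonneg pattern] by blast
  with extreme have q: "\<forall>i<n. q i = 0" by simp
  have flow: "flow_of_cap n a b c i = p i" if "P c" "i < n" for c i
  proof -
    have "flow_of_cap n a b c i = cap_flow c i" using flow_of_cap_eq[OF nonneg[OF that(1)]] by simp
    also have "\<dots> = p i + c * q i" using pq that by blast
    also have "\<dots> = p i" using q that(2) by simp
    finally show ?thesis .
  qed
  show ?thesis
  proof (intro allI impI)
    fix c i assume "P c" "i < n"
    then show "flow_of_cap n a b c i = flow_of_cap n a b c\<^sub>0 i" using flow \<open>P c\<^sub>0\<close> by simp
  qed
qed

lemma cap_breakpoints:
  obtains j cs As where "1 \<le> j" "j \<le> n"
    and "\<forall>k. 1 \<le> k \<and> k < j \<longrightarrow> cs (k + 1) < cs k" and "\<forall>k. 1 \<le> k \<and> k \<le> j \<longrightarrow> 0 < cs k"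
    and "As 0 = {}" and "\<forall>k<j. As k \<subset> As (k + 1)" and "As j = {..<n}"
    and "\<forall>k<j. \<forall>c. 0 \<le> c \<and> cs (k + 1) < c \<and> (k = 0 \<or> c \<le> cs k) \<longrightarrow> capped_set n a b c = As k"
    and "\<forall>c. 0 \<le> c \<and> c \<le> cs j \<longrightarrow> capped_set n a b c = {..<n}"
    and "\<forall>k c i. k \<le> j \<and> (k = 0 \<or> c \<le> cs k) \<and> (k = j \<or> cs (k + 1) \<le> c) \<and> i < n \<longrightarrow>
           (i \<in> As k \<longrightarrow> c \<le> cap_threshold i) \<and> (i \<notin> As k \<longrightarrow> cap_threshold i \<le> c)"
proof -
  have fin: "finite {..<n}" and ne: "{..<n} \<noteq> {}"
    and thr_pos: "\<And>i. i \<in> {..<n} \<Longrightarrow> 0 < cap_threshold i"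
    using links_nonempty cap_threshold_root by auto
  obtain j cs As where j: "1 \<le> j" "j \<le> card {..<n}"
    and dec: "\<And>k. 1 \<le> k \<Longrightarrow> k < j \<Longrightarrow> cs (k + 1) < cs k"
    and pos: "\<And>k. 1 \<le> k \<Longrightarrow> k \<le> j \<Longrightarrow> 0 < cs k"
    and As: "As 0 = {}" "\<And>k. k < j \<Longrightarrow> As k \<subset> As (k + 1)" "As j = {..<n}"
    and level_set: "\<And>k c. k < j \<Longrightarrow> cs (k + 1) < c \<Longrightarrow> k = 0 \<or> c \<le> cs k \<Longrightarrow>
           {i \<in> {..<n}. c \<le> cap_threshold i} = As k"
    and pattern: "\<And>k c i. k \<le> j \<Longrightarrow> k = 0 \<or> c \<le> cs k \<Longrightarrow> k = j \<or> cs (k + 1) \<le> c \<Longrightarrow>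
           i \<in> {..<n} \<Longrightarrow> (i \<in> As k \<longrightarrow> c \<le> cap_threshold i) \<and> (i \<notin> As k \<longrightarrow> cap_threshold i \<le> c)"
    using upper_level_sets_breakpoints[of "{..<n}" cap_threshold, OF fin ne thr_pos] by blast
  show ?thesis
  proof (rule that)
    show "1 \<le> j" "j \<le> n" "As 0 = {}" "As j = {..<n}" using j As by simp_all
    show "\<forall>k. 1 \<le> k \<and> k < j \<longrightarrow> cs (k + 1) < cs k" "\<forall>k. 1 \<le> k \<and> k \<le> j \<longrightarrow> 0 < cs k"
      "\<forall>k<j. As k \<subset> As (k + 1)"
      using dec pos As(2) by blast+
    show "\<forall>k<j. \<forall>c. 0 \<le> c \<and> cs (k + 1) < c \<and> (k = 0 \<or> c \<le> cs k) \<longrightarrow> capped_set n a b c = As k"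
      using level_set capped_set_eq by simp
    show "\<forall>c. 0 \<le> c \<and> c \<le> cs j \<longrightarrow> capped_set n a b c = {..<n}"
      using pattern[of j] j As(3) capped_set_eq by auto
    show "\<forall>k c i. k \<le> j \<and> (k = 0 \<or> c \<le> cs k) \<and> (k = j \<or> cs (k + 1) \<le> c) \<and> i < n \<longrightarrow>
        (i \<in> As k \<longrightarrow> c \<le> cap_threshold i) \<and> (i \<notin> As k \<longrightarrow> cap_threshold i \<le> c)"
      using pattern by blast
  qed
qed

lemma flow_of_cap_pieces:
  fixes j :: nat and cs :: "nat \<Rightarrow> real"
  assumes j: "1 \<le> j" and pos: "\<forall>k. 1 \<le> k \<and> k \<le> j \<longrightarrow> 0 < cs k"
    and As: "As 0 = {}" "As j = {..<n}"
    and pattern: "\<forall>k c i. k \<le> j \<and> (k = 0 \<or> c \<le> cs k) \<and> (k = j \<or> cs (k + 1) \<le> c) \<and> i < n \<longrightarrow>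
           (i \<in> As k \<longrightarrow> c \<le> cap_threshold i) \<and> (i \<notin> As k \<longrightarrow> cap_threshold i \<le> c)"
  shows "\<exists>p q. \<forall>c\<ge>cs 1. \<forall>i<n. flow_of_cap n a b c i = p i + c * q i"
    and "\<forall>c\<ge>cs 1. \<forall>i<n. flow_of_cap n a b c i = flow_of_cap n a b (cs 1) i"
    and "\<And>k. 1 \<le> k \<Longrightarrow> k < j \<Longrightarrow>
           \<exists>p q. \<forall>c. cs (k + 1) \<le> c \<and> c \<le> cs k \<longrightarrow> (\<forall>i<n. flow_of_cap n a b c i = p i + c * q i)"
    and "\<exists>p q. \<forall>c. 0 \<le> c \<and> c \<le> cs j \<longrightarrow> (\<forall>i<n. flow_of_cap n a b c i = p i + c * q i)"
    and "\<forall>c. 0 \<le> c \<and> c \<le> cs j \<longrightarrow> (\<forall>i<n. flow_of_cap n a b c i = eq_flow n a b (\<lambda>_. 0) i)"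
proof -
  have cs_1: "0 < cs 1" using pos[rule_format, of 1] j by simp
  have top_nonneg: "0 \<le> c" if "cs 1 \<le> c" for c using cs_1 that by simp
  have top_pattern: "(i \<in> As 0 \<longrightarrow> c \<le> cap_threshold i) \<and> (i \<notin> As 0 \<longrightarrow> cap_threshold i \<le> c)"
    if "cs 1 \<le> c" "i < n" for c i
    using pattern[rule_format, of 0 c i] that by simp
  show "\<exists>p q. \<forall>c\<ge>cs 1. \<forall>i<n. flow_of_cap n a b c i = p i + c * q i"
    by (rule flow_of_cap_affine_on[OF top_nonneg top_pattern])
  show "\<forall>c\<ge>cs 1. \<forall>i<n. flow_of_cap n a b c i = flow_of_cap n a b (cs 1) i"
    by (rule flow_of_cap_constant_on[OF top_nonneg top_pattern]) (simp_all add: As(1))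
  show "\<exists>p q. \<forall>c. cs (k + 1) \<le> c \<and> c \<le> cs k \<longrightarrow> (\<forall>i<n. flow_of_cap n a b c i = p i + c * q i)"
    if k: "1 \<le> k" "k < j" for k
  proof (rule flow_of_cap_affine_on[where A = "As k"])
    show "0 \<le> c" if "cs (k + 1) \<le> c \<and> c \<le> cs k" for c
      using pos[rule_format, of "k + 1"] k that by simp
    show "(i \<in> As k \<longrightarrow> c \<le> cap_threshold i) \<and> (i \<notin> As k \<longrightarrow> cap_threshold i \<le> c)"
      if "cs (k + 1) \<le> c \<and> c \<le> cs k" "i < n" for c i
      using pattern[rule_format, of k c i] k that by simp
  qed
  have bottom_nonneg: "0 \<le> c" if "0 \<le> c \<and> c \<le> cs j" for c using that by simp
  have bottom_pattern: "(i \<in> As j \<longrightarrow> c \<le> cap_threshold i) \<and> (i \<notin> As j \<longrightarrow> cap_threshold i \<le> c)"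
    if "0 \<le> c \<and> c \<le> cs j" "i < n" for c i
    using pattern[rule_format, of j c i] that by simp
  show "\<exists>p q. \<forall>c. 0 \<le> c \<and> c \<le> cs j \<longrightarrow> (\<forall>i<n. flow_of_cap n a b c i = p i + c * q i)"
    by (rule flow_of_cap_affine_on[OF bottom_nonneg bottom_pattern])
  have "\<forall>c. 0 \<le> c \<and> c \<le> cs j \<longrightarrow> (\<forall>i<n. flow_of_cap n a b c i = flow_of_cap n a b 0 i)"
    using pos[rule_format, of j] j
    by (intro flow_of_cap_constant_on[OF bottom_nonneg bottom_pattern]) (simp_all add: As(2))
  moreover have "flow_of_cap n a b 0 = eq_flow n a b (\<lambda>_. 0)"
    using unique_toll_eq[of 0] by (simp add: flow_of_cap_zero)
  ultimately show "\<forall>c. 0 \<le> c \<and> c \<le> cs j \<longrightarrow> (\<forall>i<n. flow_of_cap n a b c i = eq_flow n a b (\<lambda>_. 0) i)"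
    by simp
qed

lemma total_cost_flow_of_cap_continuous:
  "continuous_on {0..} (\<lambda>c. total_cost n a b (flow_of_cap n a b c))"
  by (rule continuous_on_eq[OF total_cost_cap_flow_continuous]) (simp add: flow_of_cap_eq)

lemma total_cost_flow_of_cap_attains_min:
  assumes "0 \<le> d" and const: "\<forall>c\<ge>d. \<forall>i<n. flow_of_cap n a b c i = flow_of_cap n a b d i"
  shows "\<exists>c\<ge>0. \<forall>c'\<ge>0. total_cost n a b (flow_of_cap n a b c) \<le> total_cost n a b (flow_of_cap n a b c')"
proof (rule continuous_constant_beyond_attains_min)
  show "continuous_on {0..d} (\<lambda>c. total_cost n a b (flow_of_cap n a b c))"
    using total_cost_flow_of_cap_continuous by (rule continuous_on_subset) auto
  show "total_cost n a b (flow_of_cap n a b c) = total_cost n a b (flow_of_cap n a b d)" if "d \<le> c" for c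
  proof -
    have "flow_of_cap n a b c i = flow_of_cap n a b d i" if "i < n" for i
      using const \<open>d \<le> c\<close> that by blast
    then show ?thesis by (simp add: total_cost_def)
  qed
qed (fact \<open>0 \<le> d\<close>)

end

theorem mainTheorem7:
  fixes n :: nat and a b :: "nat \<Rightarrow> real"
  assumes n2: "2 \<le> n"
    and apos: "\<forall>i<n. 0 < a i"
    and bnn: "\<forall>i<n. 0 \<le> b i"
    and x0pos: "\<forall>i<n. 0 < eq_flow n a b (\<lambda>_. 0) i"
    and Tsingleton: "\<forall>c\<ge>0. \<exists>!t. toll_eq n a b c t"
  shows "\<exists>(j::nat) (cs :: nat \<Rightarrow> real) (As :: nat \<Rightarrow> nat set).
     1 \<le> j \<and> j \<le> n
   \<and> (\<forall>k. 1 \<le> k \<and> k < j \<longrightarrow> cs (k+1) < cs k) \<and> 0 < cs j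
   \<and> As 0 = {} \<and> (\<forall>k<j. As k \<subset> As (k+1)) \<and> As j = {..<n}
   \<and> (\<forall>k<j. \<forall>c. 0 \<le> c \<and> cs (k+1) < c \<and> (k = 0 \<or> c \<le> cs k) \<longrightarrow> capped_set n a b c = As k)
   \<and> (\<forall>c. 0 \<le> c \<and> c \<le> cs j \<longrightarrow> capped_set n a b c = {..<n})
   \<comment> \<open>on [c_1, oo): x(c) affine (indeed constant), C(x(c)) quadratic\<close>
   \<and> (\<exists>p q :: nat \<Rightarrow> real. \<forall>c\<ge>cs 1. \<forall>i<n. flow_of_cap n a b c i = p i + c * q i)
   \<and> (\<exists>\<alpha> \<beta> \<gamma> :: real. \<forall>c\<ge>cs 1. total_cost n a b (flow_of_cap n a b c) = \<alpha> + \<beta> * c + \<gamma> * c^2)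
   \<and> (\<forall>c\<ge>cs 1. \<forall>i<n. flow_of_cap n a b c i = flow_of_cap n a b (cs 1) i)
   \<comment> \<open>on [c_{k+1}, c_k], k = 1..j-1\<close>
   \<and> (\<forall>k. 1 \<le> k \<and> k < j \<longrightarrow>
        (\<exists>p q :: nat \<Rightarrow> real. \<forall>c. cs (k+1) \<le> c \<and> c \<le> cs k \<longrightarrow> (\<forall>i<n. flow_of_cap n a b c i = p i + c * q i))
      \<and> (\<exists>\<alpha> \<beta> \<gamma> :: real. \<forall>c. cs (k+1) \<le> c \<and> c \<le> cs k \<longrightarrow>
            total_cost n a b (flow_of_cap n a b c) = \<alpha> + \<beta> * c + \<gamma> * c^2))
   \<comment> \<open>on [0, c_j]: x(c) = x(0) (untolled equilibrium)\<close>
   \<and> (\<exists>p q :: nat \<Rightarrow> real. \<forall>c. 0 \<le> c \<and> c \<le> cs j \<longrightarrow> (\<forall>i<n. flow_of_cap n a b c i = p i + c * q i))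
   \<and> (\<exists>\<alpha> \<beta> \<gamma> :: real. \<forall>c. 0 \<le> c \<and> c \<le> cs j \<longrightarrow> total_cost n a b (flow_of_cap n a b c) = \<alpha> + \<beta> * c + \<gamma> * c^2)
   \<and> (\<forall>c. 0 \<le> c \<and> c \<le> cs j \<longrightarrow> (\<forall>i<n. flow_of_cap n a b c i = eq_flow n a b (\<lambda>_. 0) i))
   \<comment> \<open>the minimum of C(x(c)) over c \<ge> 0 is attained\<close>
   \<and> (\<exists>c\<ge>0. \<forall>c'\<ge>0. total_cost n a b (flow_of_cap n a b c) \<le> total_cost n a b (flow_of_cap n a b c'))"
proof -
  interpret capped_market n a b
    using n2 apos x0pos Tsingleton by unfold_locales auto
  obtain j cs As where j: "1 \<le> j" "j \<le> n"
    and dec: "\<forall>k. 1 \<le> k \<and> k < j \<longrightarrow> cs (k + 1) < cs k" and pos: "\<forall>k. 1 \<le> k \<and> k \<le> j \<longrightarrow> 0 < cs k"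
    and As: "As 0 = {}" "\<forall>k<j. As k \<subset> As (k + 1)" "As j = {..<n}"
    and capped: "\<forall>k<j. \<forall>c. 0 \<le> c \<and> cs (k + 1) < c \<and> (k = 0 \<or> c \<le> cs k) \<longrightarrow> capped_set n a b c = As k"
      "\<forall>c. 0 \<le> c \<and> c \<le> cs j \<longrightarrow> capped_set n a b c = {..<n}"
    and pattern: "\<forall>k c i. k \<le> j \<and> (k = 0 \<or> c \<le> cs k) \<and> (k = j \<or> cs (k + 1) \<le> c) \<and> i < n \<longrightarrow>
           (i \<in> As k \<longrightarrow> c \<le> cap_threshold i) \<and> (i \<notin> As k \<longrightarrow> cap_threshold i \<le> c)"
    by (rule cap_breakpoints)
  note flows = flow_of_cap_pieces[OF j(1) pos As(1,3) pattern]
  have cs_pos: "0 < cs j" "0 \<le> cs 1" using pos[rule_format, of j] pos[rule_format, of 1] j by simp_all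
  have middle: "\<forall>k. 1 \<le> k \<and> k < j \<longrightarrow>
        (\<exists>p q. \<forall>c. cs (k + 1) \<le> c \<and> c \<le> cs k \<longrightarrow> (\<forall>i<n. flow_of_cap n a b c i = p i + c * q i))
      \<and> (\<exists>\<alpha> \<beta> \<gamma>. \<forall>c. cs (k + 1) \<le> c \<and> c \<le> cs k \<longrightarrow>
            total_cost n a b (flow_of_cap n a b c) = \<alpha> + \<beta> * c + \<gamma> * c^2)"
    using flows(3) affine_flow_quadratic_cost[OF flows(3)] by blast
  show ?thesis
    by (rule exI[of _ j], rule exI[of _ cs], rule exI[of _ As], intro conjI)
      (fact j dec cs_pos(1) As capped middle flows(1,2,4,5)
        affine_flow_quadratic_cost[OF flows(1)] affine_flow_quadratic_cost[OF flows(4)]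
        total_cost_flow_of_cap_attains_min[OF cs_pos(2) flows(2)])+
qed

end
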